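(* Let $A=(a^k)_{k\in[n]}$ be a finite collection (multiset) of points $a^k=(a^k_1,a^k_2)\in[0,1]^2$, $n\ge 1$. Then $A$ admits at least one boundaries-included average fixed point, i.e., a point $x\in[0,1]^2$ with $\operatorname{avg}(A\setminus A_{<,<}(x))=x$.
   Context: For a finite nonempty multiset $B\subset[0,1]^2$, $\operatorname{avg}(B)=\frac{1}{|B|}\sum_{b\in B}b$ (counted with multiplicity). For $x\in[0,1]^2$, $A_{<,<}(x)=\{a\in A: a_1<x_1,\ a_2<x_2\}$ (as a sub-multiset of $A$), and $A\setminus A_{<,<}(x)$ is the sub-multiset of the remaining elements. *)

theory Defs
  imports "HOL-Analysis.Analysis" "HOL-Library.Multiset"
begin

definition avg :: "(real \<times> real) multiset \<Rightarrow> real \<times> real" where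
  "avg B = ((\<Sum>\<^sub># (image_mset fst B)) / real (size B),
            (\<Sum>\<^sub># (image_mset snd B)) / real (size B))"

definition unit_square :: "(real \<times> real) set" where
  "unit_square = {p. 0 \<le> fst p \<and> fst p \<le> 1 \<and> 0 \<le> snd p \<and> snd p \<le> 1}"

definition lower_strict :: "(real \<times> real) multiset \<Rightarrow> real \<times> real \<Rightarrow> (real \<times> real) multiset" where
  "lower_strict A x = filter_mset (\<lambda>a. fst a < fst x \<and> snd a < snd x) A"

end

theory Submission
  imports Defs
begin

text \<open>Start at the origin, where no point of \<open>A\<close> lies strictly below, and iterate
  \<open>x \<mapsto> avg (upper_part A x)\<close>, where \<open>upper_part A x = A - lower_strict A x\<close>.
  The invariant is \<open>x \<le> avg (upper_part A x)\<close> componentwise: it makes the strictly lower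
  quadrant grow along the iteration, and the points it newly removes lie strictly below the
  current average in both coordinates, so removing them cannot decrease the average and the
  invariant is preserved. The remaining multiset shrinks at every step until it stops
  changing, and then its average is a fixed point.\<close>

lemma sum_mset_less_const:
  fixes f :: "'a \<Rightarrow> real"
  assumes "M \<noteq> {#}" and "\<And>a. a \<in># M \<Longrightarrow> f a < c"
  shows "(\<Sum>a\<in>#M. f a) < real (size M) * c"
proof -
  obtain b N where M: "M = add_mset b N"
    using assms(1) multiset_cases by blast
  have "(\<Sum>a\<in>#N. f a) \<le> (\<Sum>a\<in>#N. c)"
    by (rule sum_mset_mono) (simp add: M assms(2) less_imp_le)
  then show ?thesis
    using assms(2)[of b] M by (simp add: algebra_simps)
qed

lemma mean_bound_remove_below:
  fixes f :: "'a \<Rightarrow> real"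
  assumes M: "M = N + R" "M \<noteq> {#}"
    and mean: "real (size M) * c \<le> (\<Sum>a\<in>#M. f a)"
    and below: "\<And>a. a \<in># R \<Longrightarrow> f a < c"
  shows "N \<noteq> {#}" and "real (size N) * c \<le> (\<Sum>a\<in>#N. f a)"
proof -
  show "N \<noteq> {#}"
  proof
    assume "N = {#}"
    then have "(\<Sum>a\<in>#M. f a) < real (size M) * c"
      using M below sum_mset_less_const[of R f c] by simp
    then show False
      using mean by simp
  qed
  have "(\<Sum>a\<in>#R. f a) \<le> (\<Sum>a\<in>#R. c)"
    by (rule sum_mset_mono) (use below in \<open>auto intro: less_imp_le\<close>)
  then show "real (size N) * c \<le> (\<Sum>a\<in>#N. f a)"
    using M mean by (simp add: algebra_simps)
qed

lemma le_avg_iff: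
  assumes "S \<noteq> {#}"
  shows "x \<le> avg S \<longleftrightarrow>
    real (size S) * fst x \<le> (\<Sum>a\<in>#S. fst a) \<and> real (size S) * snd x \<le> (\<Sum>a\<in>#S. snd a)"
proof -
  have "real (size S) > 0"
    using assms by (simp add: nonempty_has_size)
  then show ?thesis
    unfolding avg_def less_eq_prod_def by (simp add: pos_le_divide_eq mult.commute)
qed

lemma avg_le_remove_below:
  assumes "S = N + R" "S \<noteq> {#}"
    and "\<And>a. a \<in># R \<Longrightarrow> fst a < fst (avg S) \<and> snd a < snd (avg S)"
  shows "N \<noteq> {#}" and "avg S \<le> avg N"
proof -
  have S_mean: "real (size S) * fst (avg S) \<le> (\<Sum>a\<in>#S. fst a)"
    "real (size S) * snd (avg S) \<le> (\<Sum>a\<in>#S. snd a)"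
    using le_avg_iff[OF assms(2), of "avg S"] by simp_all
  show N: "N \<noteq> {#}"
    using mean_bound_remove_below(1)[OF assms(1,2) S_mean(1)] assms(3) by blast
  show "avg S \<le> avg N"
    unfolding le_avg_iff[OF N]
    using mean_bound_remove_below(2)[OF assms(1,2) S_mean(1)]
      mean_bound_remove_below(2)[OF assms(1,2) S_mean(2)] assms(3) by blast
qed

lemma avg_in_unit_square:
  assumes "S \<noteq> {#}" and "set_mset S \<subseteq> unit_square"
  shows "avg S \<in> unit_square"
proof -
  have pos: "real (size S) > 0"
    using assms(1) by (simp add: nonempty_has_size)
  have "(\<Sum>a\<in>#S. 0) \<le> (\<Sum>a\<in>#S. fst a)" "(\<Sum>a\<in>#S. fst a) \<le> (\<Sum>a\<in>#S. 1)"
       "(\<Sum>a\<in>#S. 0) \<le> (\<Sum>a\<in>#S. snd a)" "(\<Sum>a\<in>#S. snd a) \<le> (\<Sum>a\<in>#S. 1)"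
    by (rule sum_mset_mono; use assms(2) in \<open>force simp: unit_square_def\<close>)+
  then show ?thesis
    using pos unfolding avg_def unit_square_def by (simp add: divide_simps)
qed

definition upper_part :: "(real \<times> real) multiset \<Rightarrow> real \<times> real \<Rightarrow> (real \<times> real) multiset" where
  "upper_part A x = filter_mset (\<lambda>a. \<not> (fst a < fst x \<and> snd a < snd x)) A"

lemma diff_lower_strict: "A - lower_strict A x = upper_part A x"
  unfolding upper_part_def lower_strict_def by (rule multiset_eqI) simp

lemma upper_part_split:
  assumes "x \<le> y"
  shows "upper_part A x = upper_part A y + lower_strict (upper_part A x) y"
proof -
  have "upper_part A y = filter_mset (\<lambda>a. \<not> (fst a < fst y \<and> snd a < snd y)) (upper_part A x)"
    using assms unfolding upper_part_def filter_filter_mset less_eq_prod_def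
    by (intro filter_mset_cong) auto
  then show ?thesis
    unfolding lower_strict_def by (simp add: multiset_partition[symmetric] add.commute)
qed

lemma avg_upper_part_step:
  assumes "upper_part A x \<noteq> {#}" and "x \<le> avg (upper_part A x)"
  defines "y \<equiv> avg (upper_part A x)"
  shows "upper_part A y \<noteq> {#}" and "y \<le> avg (upper_part A y)"
    and "upper_part A y = upper_part A x \<or> size (upper_part A y) < size (upper_part A x)"
proof -
  note split = upper_part_split[OF assms(2), of A, folded y_def]
  have below: "\<And>a. a \<in># lower_strict (upper_part A x) y \<Longrightarrow> fst a < fst y \<and> snd a < snd y"
    unfolding lower_strict_def by simp
  show "upper_part A y \<noteq> {#}" "y \<le> avg (upper_part A y)"
    using avg_le_remove_below[OF split assms(1) below[unfolded y_def]] unfolding y_def by simp_all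
  show "upper_part A y = upper_part A x \<or> size (upper_part A y) < size (upper_part A x)"
  proof (cases "lower_strict (upper_part A x) y = {#}")
    case False
    have "size (upper_part A x) = size (upper_part A y) + size (lower_strict (upper_part A x) y)"
      by (subst split) simp
    then show ?thesis
      using False by (simp add: nonempty_has_size)
  qed (use split in simp)
qed

lemma avg_upper_part_fixed_point:
  assumes "upper_part A x \<noteq> {#}" and "x \<le> avg (upper_part A x)"
  shows "\<exists>z. upper_part A z \<noteq> {#} \<and> avg (upper_part A z) = z"
  using assms
proof (induction "size (upper_part A x)" arbitrary: x rule: less_induct)
  case less
  define y where "y = avg (upper_part A x)"
  note step = avg_upper_part_step[OF less.prems, folded y_def]
  from step(3) show ?case
  proof
    assume "upper_part A y = upper_part A x"
    then show ?thesis
      using less.prems(1) y_def by metis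
  next
    assume "size (upper_part A y) < size (upper_part A x)"
    then show ?thesis
      using less.hyps step(1,2) by blast
  qed
qed

theorem lemma1:
  fixes A :: "(real \<times> real) multiset"
  assumes "A \<noteq> {#}"
    and "set_mset A \<subseteq> unit_square"
  shows "\<exists>x\<in>unit_square. A - lower_strict A x \<noteq> {#} \<and> avg (A - lower_strict A x) = x"
proof -
  have "upper_part A (0, 0) = A"
    using assms(2) unfolding upper_part_def unit_square_def
    by (subst filter_mset_eq_conv) force
  moreover have "(0, 0) \<le> avg A"
    using avg_in_unit_square[OF assms] unfolding unit_square_def by (simp add: less_eq_prod_def)
  ultimately obtain z where z: "upper_part A z \<noteq> {#}" "avg (upper_part A z) = z"
    using avg_upper_part_fixed_point[of A "(0, 0)"] assms(1) by auto
  have "set_mset (upper_part A z) \<subseteq> unit_square"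
    using assms(2) unfolding upper_part_def by auto
  then have "z \<in> unit_square"
    using avg_in_unit_square[OF z(1)] z(2) by simp
  with z show ?thesis
    unfolding diff_lower_strict by blast
qed

end
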